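(* Let $K, L$ be compact convex subsets of $\mathbb{R}^2$ such that for every unit vector $u \in \mathbb{R}^2$ the projection $L_u$ (onto the line $u^\perp$) contains a translate of $K_u$. Then $V_2(K) \le \tfrac{3}{2} V_2(L)$. Moreover, equality holds when $L$ is a triangle and $K = \tfrac12(L + (-L))$, and such a pair satisfies the projection hypothesis.
   Context: For a set $S$ and unit vector $u$, $S_u$ denotes the orthogonal projection of $S$ onto $u^\perp$. "$A$ contains a translate of $B$" means $B+w\subseteq A$ for some $w$. $L + (-L) = \{x - y : x, y \in L\}$. $V_2$ is area. *)

theory Defs
  imports "HOL-Analysis.Analysis"
begin

definition proj_perp :: "real^2 \<Rightarrow> (real^2) set \<Rightarrow> (real^2) set" where
  "proj_perp u S = (\<lambda>x. x - (x \<bullet> u) *\<^sub>R u) ` S"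

definition contains_translate :: "(real^2) set \<Rightarrow> (real^2) set \<Rightarrow> bool" where
  "contains_translate A B \<longleftrightarrow> (\<exists>w. (\<lambda>x. x + w) ` B \<subseteq> A)"

definition proj_hyp :: "(real^2) set \<Rightarrow> (real^2) set \<Rightarrow> bool" where
  "proj_hyp K L \<longleftrightarrow> (\<forall>u. norm u = 1 \<longrightarrow> contains_translate (proj_perp u L) (proj_perp u K))"

end

theory Submission
  imports Defs
begin

(* For compact convex K, L in the plane such that every projection of L onto a line contains
   a translate of the corresponding projection of K, we prove  |K| <= 3/2 |L|,  with equality
   for a triangle L and K = (L - L)/2.  Writing  D(X) = {x - y | x y. x : X, y : X}  for the
   difference body, the argument is the chain

        4 |K|  <=  |D(K)|  <=  |D(L)|  <=  6 |L|.

   The left inequality is the planar Brunn-Minkowski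
   inequality for K and -K, proved by slicing and the one-dimensional inequality for differences
   of intervals.  The right inequality is the planar Rogers-Shephard inequality, obtained by
   integrating the covariogram x |-> |L \<inter> (L + x)| and bounding it from below on a cone over
   D(L).  The middle inclusion follows from the hypothesis, which makes the support function
   of D(K) at most that of D(L); when |L| = 0 both bodies lie on parallel lines.  Finally, for
   a triangle, D(L) contains an affine image of a hexagon of area 3, so |D(L)| = 6 |L|, and
   (L - L)/2 has the same projections as L up to translation. *)

definition difference_body :: "'a::real_vector set \<Rightarrow> 'a set" where
  "difference_body K = {x - y | x y. x \<in> K \<and> y \<in> K}"

lemma difference_body_UN: "difference_body K = (\<Union>x\<in>K. \<Union>y\<in>K. {x - y})"
  unfolding difference_body_def by blast

lemma compact_difference_body:
  fixes K :: "'a::real_normed_vector set"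
  shows "compact K \<Longrightarrow> compact (difference_body K)"
  unfolding difference_body_def using compact_differences by blast

lemma convex_difference_body: "convex K \<Longrightarrow> convex (difference_body K)"
  unfolding difference_body_UN using convex_differences by fastforce

lemma difference_body_borel:
  fixes K :: "'a::euclidean_space set"
  shows "compact K \<Longrightarrow> difference_body K \<in> sets borel"
  by (simp add: borel_compact compact_difference_body)

lemma bounded_borel_lmeasurable:
  fixes S :: "'a::euclidean_space set"
  assumes "S \<in> sets borel" "bounded S"
  shows "S \<in> lmeasurable" "emeasure lborel S = ennreal (measure lebesgue S)"
proof -
  have "S \<in> sets lebesgue" using assms by (simp add: sets_completionI_sets)
  then show l: "S \<in> lmeasurable" using assms by (intro bounded_set_imp_lmeasurable)
  have "emeasure lborel S = emeasure lebesgue S" using assms by simp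
  also have "\<dots> = ennreal (measure lebesgue S)" using l by (simp add: emeasure_eq_measure2)
  finally show "emeasure lborel S = ennreal (measure lebesgue S)" .
qed

lemma emeasure_compact_eq_measure:
  fixes S :: "'a::euclidean_space set"
  shows "compact S \<Longrightarrow> emeasure lborel S = ennreal (measure lebesgue S)"
  by (simp add: borel_compact bounded_borel_lmeasurable(2) compact_imp_bounded)

lemma emeasure_compact_finite:
  fixes S :: "'a::euclidean_space set"
  shows "compact S \<Longrightarrow> emeasure lborel S < \<infinity>"
  by (intro emeasure_bounded_finite compact_imp_bounded)

lemma emeasure_scaled_translate:
  fixes S :: "(real^2) set"
  assumes "compact S"
  shows "emeasure lborel ((\<lambda>z. m *\<^sub>R z + d) ` S) = ennreal (m^2) * emeasure lborel S"
proof -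
  have c: "compact ((\<lambda>z. m *\<^sub>R z + d) ` S)"
    by (intro compact_continuous_image assms continuous_intros)
  have "emeasure lborel ((\<lambda>z. m *\<^sub>R z + d) ` S) = emeasure lebesgue ((\<lambda>z. m *\<^sub>R z + d) ` S)"
    using c by (simp add: borel_compact)
  also have "\<dots> = \<bar>m\<bar> ^ 2 * emeasure lebesgue S"
    using emeasure_lebesgue_affine[of m d S] by simp
  also have "\<dots> = ennreal (m^2) * emeasure lborel S"
    using assms by (simp add: borel_compact power2_abs ennreal_power)
  finally show ?thesis .
qed

definition pt :: "real \<Rightarrow> real \<Rightarrow> real^2" where
  "pt a s = a *\<^sub>R axis 1 1 + s *\<^sub>R axis 2 1"

lemma pt_nth [simp]: "pt a s $ 1 = a" "pt a s $ 2 = s"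
  by (auto simp: pt_def axis_def)

lemma pt_measurable [measurable]: "(\<lambda>p. pt (fst p) (snd p)) \<in> borel_measurable borel"
  unfolding pt_def by (intro borel_measurable_continuous_onI continuous_intros)

lemma pt_diff: "pt a s - pt b t = pt (a - b) (s - t)"
  by (simp add: vec_eq_iff forall_2)

lemma pt_convex_comb: "pt a ((1 - u) * s + u * t) = (1 - u) *\<^sub>R pt a s + u *\<^sub>R pt a t"
  by (simp add: vec_eq_iff forall_2 algebra_simps)

lemma pt_norm: "\<bar>a\<bar> \<le> norm (pt a s)" "\<bar>s\<bar> \<le> norm (pt a s)"
  using component_le_norm_cart[of "pt a s" 1] component_le_norm_cart[of "pt a s" 2] by auto

lemma prod_Basis_2: "(\<Prod>b\<in>(Basis::(real^2) set). f b) = f (axis 1 1) * f (axis 2 1)"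
proof -
  have B: "(Basis::(real^2) set) = {axis 1 1, axis 2 1}"
    by (auto simp: Basis_vec_def UNIV_2)
  have "axis (1::2) (1::real) \<noteq> axis 2 1" by (simp add: axis_eq_axis)
  then show ?thesis unfolding B by (subst prod.insert) auto
qed

lemma distr_pt: "distr (lborel \<Otimes>\<^sub>M lborel) borel (\<lambda>p. pt (fst p) (snd p)) = (lborel :: (real^2) measure)"
proof (rule lborel_eqI[symmetric])
  fix l u :: "real^2"
  assume le: "\<And>b. b \<in> Basis \<Longrightarrow> l \<bullet> b \<le> u \<bullet> b"
  have l1: "l$1 \<le> u$1" using le[of "axis 1 1"] by (auto simp: Basis_vec_def inner_axis)
  have l2: "l$2 \<le> u$2" using le[of "axis 2 1"] by (auto simp: Basis_vec_def inner_axis)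
  have box: "(\<lambda>p. pt (fst p) (snd p)) -` box l u \<inter> space (lborel \<Otimes>\<^sub>M lborel)
      = {l$1<..<u$1} \<times> {l$2<..<u$2}"
    by (auto simp: box_def Basis_vec_def inner_axis space_pair_measure UNIV_2)
  have m: "(\<lambda>p. pt (fst p) (snd p)) \<in> (lborel \<Otimes>\<^sub>M lborel) \<rightarrow>\<^sub>M borel"
    by (simp add: lborel_prod)
  have "emeasure (distr (lborel \<Otimes>\<^sub>M lborel) borel (\<lambda>p. pt (fst p) (snd p))) (box l u)
      = emeasure (lborel \<Otimes>\<^sub>M lborel) ({l$1<..<u$1} \<times> {l$2<..<u$2})"
    by (subst emeasure_distr[OF m]) (simp_all add: box)
  also have "\<dots> = (\<Prod>b\<in>Basis. (u - l) \<bullet> b)"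
    using l1 l2 by (simp add: lborel.emeasure_pair_measure_Times prod_Basis_2 inner_axis ennreal_mult)
  finally show "emeasure (distr (lborel \<Otimes>\<^sub>M lborel) borel (\<lambda>p. pt (fst p) (snd p))) (box l u)
      = (\<Prod>b\<in>Basis. (u - l) \<bullet> b)" .
qed simp

lemma nn_integral_pt:
  assumes [measurable]: "h \<in> borel_measurable (borel :: (real^2) measure)"
  shows "(\<integral>\<^sup>+z. h z \<partial>lborel) = (\<integral>\<^sup>+a. \<integral>\<^sup>+s. h (pt a s) \<partial>lborel \<partial>lborel)"
proof -
  have "(\<integral>\<^sup>+z. h z \<partial>lborel) = (\<integral>\<^sup>+z. h z \<partial>distr (lborel \<Otimes>\<^sub>M lborel) borel (\<lambda>p. pt (fst p) (snd p)))"
    by (simp add: distr_pt)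
  also have "\<dots> = (\<integral>\<^sup>+p. h (pt (fst p) (snd p)) \<partial>(lborel \<Otimes>\<^sub>M lborel))"
    by (subst nn_integral_distr) (simp_all add: lborel_prod)
  also have "\<dots> = (\<integral>\<^sup>+a. \<integral>\<^sup>+s. h (pt a s) \<partial>lborel \<partial>lborel)"
    by (subst lborel.nn_integral_fst[symmetric])
       (simp_all add: lborel_prod measurable_compose[OF pt_measurable assms])
  finally show ?thesis .
qed

lemma layer_cake:
  fixes f :: "real \<Rightarrow> ennreal"
  assumes [measurable]: "f \<in> borel_measurable borel" and fin: "\<And>x. f x < \<infinity>"
  shows "(\<integral>\<^sup>+x. f x \<partial>lborel) = (\<integral>\<^sup>+r. indicator {0..} r * emeasure lborel {x. ennreal r < f x} \<partial>lborel)"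
proof -
  have inner: "(\<integral>\<^sup>+r. (if 0 \<le> r \<and> ennreal r < f x then 1 else 0) \<partial>lborel) = f x" for x
  proof -
    obtain c where c: "f x = ennreal c" "0 \<le> c" using fin[of x]
      by (cases "f x" rule: ennreal_cases) auto
    have "(\<lambda>r. (if 0 \<le> r \<and> ennreal r < f x then 1 else 0) :: ennreal) = indicator {0..<c}"
      using c by (auto simp: fun_eq_iff ennreal_less_iff split: split_indicator)
    then show ?thesis using c by simp
  qed
  have "(\<integral>\<^sup>+x. f x \<partial>lborel) = (\<integral>\<^sup>+x. \<integral>\<^sup>+r. (if 0 \<le> r \<and> ennreal r < f x then 1 else 0) \<partial>lborel \<partial>lborel)"
    by (simp add: inner)
  also have "\<dots> = (\<integral>\<^sup>+r. \<integral>\<^sup>+x. (if 0 \<le> r \<and> ennreal r < f x then 1 else 0) \<partial>lborel \<partial>lborel)"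
    by (rule lborel_pair.Fubini'[symmetric]) measurable
  also have "\<dots> = (\<integral>\<^sup>+r. indicator {0..} r * emeasure lborel {x. ennreal r < f x} \<partial>lborel)"
  proof (rule nn_integral_cong)
    fix r :: real
    have "(\<lambda>x. (if 0 \<le> r \<and> ennreal r < f x then 1 else 0) :: ennreal)
        = (\<lambda>x. indicator {0..} r * indicator {x. ennreal r < f x} x)"
      by (auto simp: fun_eq_iff split: split_indicator)
    moreover have "{x. ennreal r < f x} \<in> sets lborel" by measurable
    ultimately show "(\<integral>\<^sup>+x. (if 0 \<le> r \<and> ennreal r < f x then 1 else 0) \<partial>lborel)
        = indicator {0..} r * emeasure lborel {x. ennreal r < f x}"
      by (simp add: nn_integral_cmult)
  qed
  finally show ?thesis .
qed

(* The translates S - a and S - b by points near sup S and inf S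
   lie in T and overlap in an arbitrarily short interval. *)
lemma measure_differences_1d:
  fixes S T :: "real set"
  assumes S: "S \<in> lmeasurable" and T: "T \<in> lmeasurable" and bS: "bounded S"
    and ST: "\<And>a b. a \<in> S \<Longrightarrow> b \<in> S \<Longrightarrow> a - b \<in> T"
  shows "2 * measure lebesgue S \<le> measure lebesgue T"
proof (cases "S = {}")
  case True then show ?thesis by simp
next
  case ne: False
  show ?thesis
  proof (rule field_le_epsilon)
    fix e0 :: real assume e0: "0 < e0"
    define e where "e = e0 / 2"
    have e: "0 < e" using e0 by (simp add: e_def)
    have bda: "bdd_above S" and bdb: "bdd_below S" using bS
      by (auto simp: bounded_imp_bdd_above bounded_imp_bdd_below)
    obtain a where a: "a \<in> S" "Sup S - e < a" using less_cSupD[OF ne, of "Sup S - e"] e by auto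
    obtain b where b: "b \<in> S" "b < Inf S + e" using cInf_lessD[OF ne, of "Inf S + e"] e by auto
    define X where "X = (\<lambda>x. x - a) ` S"
    define Y where "Y = (\<lambda>x. x - b) ` S"
    have X: "X \<in> lmeasurable" "measure lebesgue X = measure lebesgue S"
      unfolding X_def using S by (auto intro: measurable_translation_subtract measure_translation_subtract)
    have Y: "Y \<in> lmeasurable" "measure lebesgue Y = measure lebesgue S"
      unfolding Y_def using S by (auto intro: measurable_translation_subtract measure_translation_subtract)
    have XY: "X \<union> Y \<subseteq> T" unfolding X_def Y_def using ST a b by auto
    have "X \<inter> Y \<subseteq> {-e..e}"
    proof
      fix z assume "z \<in> X \<inter> Y"
      then obtain x y where "x \<in> S" "y \<in> S" "z = x - a" "z = y - b" unfolding X_def Y_def by auto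
      moreover have "x \<le> Sup S" using \<open>x \<in> S\<close> bda by (simp add: cSup_upper)
      moreover have "Inf S \<le> y" using \<open>y \<in> S\<close> bdb by (simp add: cInf_lower)
      ultimately show "z \<in> {-e..e}" using a b by auto
    qed
    then have "measure lebesgue (X \<inter> Y) \<le> measure lebesgue {-e..e}"
      using X(1) Y(1) by (intro measure_mono_fmeasurable) (auto intro: sets.Int)
    also have "\<dots> = 2 * e" using e by simp
    finally have I: "measure lebesgue (X \<inter> Y) \<le> 2 * e" .
    have "measure lebesgue (X \<union> Y) \<le> measure lebesgue T"
      using XY X Y T by (intro measure_mono_fmeasurable) (auto intro: fmeasurable.Un)
    moreover have "measure lebesgue (X \<union> Y) = measure lebesgue X + measure lebesgue Y - measure lebesgue (X \<inter> Y)"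
      using X Y by (intro measure_Un3) auto
    ultimately show "2 * measure lebesgue S \<le> measure lebesgue T + e0"
      using X Y I by (simp add: e_def)
  qed
qed

definition slice :: "(real^2) set \<Rightarrow> real \<Rightarrow> real set" where
  "slice K a = {s. pt a s \<in> K}"

definition slice_length :: "(real^2) set \<Rightarrow> real \<Rightarrow> ennreal" where
  "slice_length K a = emeasure lborel (slice K a)"

lemma compact_slice:
  assumes K: "compact K"
  shows "compact (slice K a)"
proof -
  have "continuous_on UNIV (pt a)"
    unfolding pt_def by (intro continuous_intros)
  then have "closed (slice K a)" unfolding slice_def
    using continuous_on_closed_vimage[OF closed_UNIV, of "pt a"] compact_imp_closed[OF K]
    by (simp add: vimage_def)
  moreover obtain B where "\<forall>x\<in>K. norm x \<le> B" using K compact_imp_bounded bounded_iff by metis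
  then have "bounded (slice K a)" unfolding slice_def bounded_iff
    using pt_norm(2) by (metis mem_Collect_eq order_trans real_norm_def)
  ultimately show ?thesis by (simp add: compact_eq_bounded_closed)
qed

lemma convex_slice: "convex K \<Longrightarrow> convex (slice K a)"
  unfolding convex_alt slice_def by (auto simp: pt_convex_comb)

lemma slice_interval:
  assumes "compact K" "convex K" "slice K a \<noteq> {}"
  obtains p q where "p \<le> q" "slice K a = {p..q}"
proof -
  have "connected (slice K a) \<and> compact (slice K a)"
    using assms compact_slice convex_slice convex_connected by blast
  then obtain p q where "slice K a = {p..q}" using connected_compact_interval_1 by metis
  moreover then have "p \<le> q" using assms(3) by auto
  ultimately show ?thesis using that by blast
qed

lemma slice_length_finite: "compact K \<Longrightarrow> slice_length K a < \<infinity>"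
  unfolding slice_length_def by (intro emeasure_bounded_finite compact_imp_bounded compact_slice)

lemma bounded_slice_support:
  assumes "bounded K"
  shows "bounded {a. slice K a \<noteq> {}}"
proof -
  obtain B where B: "\<forall>x\<in>K. norm x \<le> B" using assms bounded_iff by metis
  show ?thesis unfolding bounded_iff
  proof (intro exI ballI)
    fix a assume "a \<in> {a. slice K a \<noteq> {}}"
    then obtain s where "pt a s \<in> K" by (auto simp: slice_def)
    then show "norm a \<le> B" using B pt_norm(1)[of a s] by force
  qed
qed

(* The slice of D(K) over a - b contains the difference of the slices over a and b, an
   interval whose length is the sum of theirs. *)
lemma slice_length_difference_body:
  assumes K: "compact K" "convex K" and na: "slice K a \<noteq> {}" and nb: "slice K b \<noteq> {}"
  shows "slice_length K a + slice_length K b \<le> slice_length (difference_body K) (a - b)"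
proof -
  obtain p q where pq: "p \<le> q" "slice K a = {p..q}" using slice_interval[OF K na] by metis
  obtain p' q' where pq': "p' \<le> q'" "slice K b = {p'..q'}" using slice_interval[OF K nb] by metis
  have sub: "{p - q'..q - p'} \<subseteq> slice (difference_body K) (a - b)"
  proof
    fix s assume s: "s \<in> {p - q'..q - p'}"
    define s1 where "s1 = max p (s + p')"
    have "s1 \<in> {p..q}" "s1 - s \<in> {p'..q'}" using s pq pq' by (auto simp: s1_def)
    then have "pt a s1 \<in> K" "pt b (s1 - s) \<in> K" using pq pq' by (auto simp: slice_def)
    moreover have "pt (a - b) s = pt a s1 - pt b (s1 - s)" by (simp add: pt_diff)
    ultimately show "s \<in> slice (difference_body K) (a - b)"
      unfolding slice_def difference_body_def by blast
  qed
  have "slice_length K a + slice_length K b = ennreal ((q - p) + (q' - p'))"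
    using pq pq' by (simp del: ennreal_plus add: slice_length_def ennreal_plus[symmetric])
  also have "\<dots> = emeasure lborel {p - q'..q - p'}" using pq pq' by (simp add: algebra_simps)
  also have "\<dots> \<le> slice_length (difference_body K) (a - b)"
    unfolding slice_length_def using sub
    by (rule emeasure_mono) (use compact_difference_body[OF K(1)] compact_slice in \<open>auto intro: borel_compact\<close>)
  finally show ?thesis .
qed

lemma slice_length_eq_integral:
  assumes "K \<in> sets borel"
  shows "slice_length K a = (\<integral>\<^sup>+s. indicator K (pt a s) \<partial>lborel)"
proof -
  have "slice K a \<in> sets borel"
    unfolding slice_def
    using measurable_sets_borel[OF measurable_compose[OF _ pt_measurable] assms, of "\<lambda>s. (a, s)"]
    by (simp add: vimage_def)
  moreover have "(\<lambda>s. indicator K (pt a s) :: ennreal) = indicator (slice K a)"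
    by (auto simp: fun_eq_iff slice_def split: split_indicator)
  ultimately show ?thesis by (simp add: slice_length_def)
qed

lemma slice_length_measurable [measurable]:
  assumes "K \<in> sets borel"
  shows "slice_length K \<in> borel_measurable borel"
proof -
  have [measurable]: "Measurable.pred (borel \<Otimes>\<^sub>M borel) (\<lambda>x. pt (fst x) (snd x) \<in> K)"
    unfolding borel_prod by (rule pred_sets2[OF assms pt_measurable])
  have "slice_length K = (\<lambda>a. \<integral>\<^sup>+s. indicator K (pt a s) \<partial>lborel)"
    using slice_length_eq_integral[OF assms] by auto
  also have "\<dots> \<in> borel_measurable borel" by measurable
  finally show ?thesis .
qed

lemma emeasure_by_slices:
  assumes [measurable]: "K \<in> sets borel"
  shows "emeasure lborel K = (\<integral>\<^sup>+a. slice_length K a \<partial>lborel)"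
proof -
  have "emeasure lborel K = (\<integral>\<^sup>+z. indicator K z \<partial>lborel)" by simp
  also have "\<dots> = (\<integral>\<^sup>+a. \<integral>\<^sup>+s. indicator K (pt a s) \<partial>lborel \<partial>lborel)"
    by (rule nn_integral_pt) simp
  also have "\<dots> = (\<integral>\<^sup>+a. slice_length K a \<partial>lborel)"
    by (simp add: slice_length_eq_integral)
  finally show ?thesis .
qed

(* Superlevel sets of the slice lengths: if 2 f(a) > r and 2 f(b) > r then
   F(a - b) >= f(a) + f(b) > r, where f and F are the slice lengths of K and D(K).  Hence the
   one-dimensional inequality applies to the superlevel sets. *)
lemma superlevel_difference_body:
  assumes K: "compact K" "convex K" and r: "0 \<le> r"
  shows "2 * emeasure lborel {a. ennreal r < 2 * slice_length K a}
           \<le> emeasure lborel {t. ennreal r < slice_length (difference_body K) t}"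
proof -
  define S where "S = {a. ennreal r < 2 * slice_length K a}"
  define T where "T = {t. ennreal r < slice_length (difference_body K) t}"
  have KB [measurable]: "K \<in> sets borel" using K by (simp add: borel_compact)
  have DB [measurable]: "difference_body K \<in> sets borel" using K by (simp add: difference_body_borel)
  have SB: "S \<in> sets borel" unfolding S_def by measurable
  have TB: "T \<in> sets borel" unfolding T_def by measurable
  have Ssub: "S \<subseteq> {a. slice K a \<noteq> {}}"
    unfolding S_def slice_length_def by (auto simp: ennreal_less_iff)
  have Tsub: "T \<subseteq> {a. slice (difference_body K) a \<noteq> {}}"
    unfolding T_def slice_length_def by auto
  have bS: "bounded S"
    using bounded_subset[OF bounded_slice_support Ssub] K compact_imp_bounded by blast
  have bT: "bounded T"
    using bounded_subset[OF bounded_slice_support Tsub] K compact_difference_body compact_imp_bounded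
    by blast
  have ST: "a - b \<in> T" if "a \<in> S" "b \<in> S" for a b
  proof -
    have "slice K a \<noteq> {}" "slice K b \<noteq> {}" using that Ssub by auto
    then have le: "slice_length K a + slice_length K b \<le> slice_length (difference_body K) (a - b)"
      using slice_length_difference_body[OF K] by blast
    have "2 * min (slice_length K a) (slice_length K b) \<le> slice_length K a + slice_length K b"
      by (simp add: mult_2 min_def add_mono)
    moreover have "ennreal r < 2 * min (slice_length K a) (slice_length K b)"
      using that unfolding S_def by (simp add: min_def)
    ultimately show ?thesis using le unfolding T_def by auto
  qed
  have "2 * measure lebesgue S \<le> measure lebesgue T"
    using measure_differences_1d[OF bounded_borel_lmeasurable(1)[OF SB bS]
        bounded_borel_lmeasurable(1)[OF TB bT] bS ST] .
  then have "ennreal (2 * measure lebesgue S) \<le> ennreal (measure lebesgue T)" by (rule ennreal_leI)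
  then show ?thesis
    unfolding S_def[symmetric] T_def[symmetric]
      bounded_borel_lmeasurable(2)[OF SB bS] bounded_borel_lmeasurable(2)[OF TB bT]
    by (simp add: ennreal_mult)
qed

theorem brunn_minkowski_difference_body:
  fixes K :: "(real^2) set"
  assumes K: "compact K" "convex K"
  shows "4 * emeasure lborel K \<le> emeasure lborel (difference_body K)"
proof -
  let ?f = "slice_length K" and ?F = "slice_length (difference_body K)"
  have KB [measurable]: "K \<in> sets borel" using K by (simp add: borel_compact)
  have [measurable]: "difference_body K \<in> sets borel" using K by (simp add: difference_body_borel)
  have "4 * emeasure lborel K = 2 * (\<integral>\<^sup>+a. 2 * ?f a \<partial>lborel)"
    unfolding emeasure_by_slices[OF KB] by (simp add: nn_integral_cmult mult.assoc[symmetric])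
  also have "(\<integral>\<^sup>+a. 2 * ?f a \<partial>lborel)
      = (\<integral>\<^sup>+r. indicator {0..} r * emeasure lborel {a. ennreal r < 2 * ?f a} \<partial>lborel)"
    using slice_length_finite[OF K(1)] by (intro layer_cake) (auto simp: ennreal_mult_less_top)
  also have "2 * \<dots> = (\<integral>\<^sup>+r. indicator {0..} r * (2 * emeasure lborel {a. ennreal r < 2 * ?f a}) \<partial>lborel)"
    by (subst nn_integral_cmult[symmetric]) (simp_all add: mult.left_commute)
  also have "\<dots> \<le> (\<integral>\<^sup>+r. indicator {0..} r * emeasure lborel {t. ennreal r < ?F t} \<partial>lborel)"
    by (intro nn_integral_mono) (auto simp: superlevel_difference_body[OF K] split: split_indicator)
  also have "\<dots> = (\<integral>\<^sup>+t. ?F t \<partial>lborel)"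
    using slice_length_finite[OF compact_difference_body[OF K(1)]] by (intro layer_cake[symmetric]) auto
  also have "\<dots> = emeasure lborel (difference_body K)"
    by (rule emeasure_by_slices[symmetric]) measurable
  finally show ?thesis .
qed

definition covariogram :: "'a::euclidean_space set \<Rightarrow> 'a \<Rightarrow> ennreal" where
  "covariogram L x = (\<integral>\<^sup>+y. indicator L y * indicator L (y - x) \<partial>lborel)"

lemma nn_integral_reflect:
  fixes h :: "'a::euclidean_space \<Rightarrow> ennreal"
  assumes [measurable]: "h \<in> borel_measurable borel"
  shows "(\<integral>\<^sup>+x. h (y - x) \<partial>lborel) = (\<integral>\<^sup>+x. h x \<partial>lborel)"
proof -
  have eq: "lborel = distr lborel borel (\<lambda>x::'a. y + (-1) *\<^sub>R x)"
    using lborel_affine[of "-1" y] by (simp add: density_1)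
  have "(\<integral>\<^sup>+x. h x \<partial>lborel) = (\<integral>\<^sup>+x. h x \<partial>distr lborel borel (\<lambda>x::'a. y + (-1) *\<^sub>R x))"
    by (subst eq[symmetric]) simp
  also have "\<dots> = (\<integral>\<^sup>+x. h (y + (-1) *\<^sub>R x) \<partial>lborel)"
    by (subst nn_integral_distr) simp_all
  finally show ?thesis by simp
qed

lemma integral_covariogram:
  fixes L :: "'a::euclidean_space set"
  assumes [measurable]: "L \<in> sets borel"
  shows "(\<integral>\<^sup>+x. covariogram L x \<partial>lborel) = emeasure lborel L * emeasure lborel L"
proof -
  have [measurable]: "(\<lambda>p::'a \<times> 'a. snd p - fst p) \<in> borel_measurable borel"
    "(\<lambda>p::'a \<times> 'a. snd p) \<in> borel_measurable borel"
    by (intro borel_measurable_continuous_onI continuous_intros)+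
  have "(\<lambda>p::'a \<times> 'a. indicator L (snd p) * indicator L (snd p - fst p) :: ennreal)
      \<in> borel_measurable borel"
    by measurable
  then have m: "(\<lambda>(x, y). indicator L y * indicator L (y - x) :: ennreal)
      \<in> borel_measurable (lborel \<Otimes>\<^sub>M lborel)"
    unfolding lborel_prod by (simp add: case_prod_unfold)
  have "(\<integral>\<^sup>+x. covariogram L x \<partial>lborel)
      = (\<integral>\<^sup>+y. (\<integral>\<^sup>+x. indicator L y * indicator L (y - x) \<partial>lborel) \<partial>lborel)"
    unfolding covariogram_def using lborel_pair.Fubini'[OF m] by simp
  also have "\<dots> = (\<integral>\<^sup>+y. indicator L y * emeasure lborel L \<partial>lborel)"
  proof (rule nn_integral_cong)
    fix y :: 'a
    have "(\<integral>\<^sup>+x. indicator L y * indicator L (y - x) \<partial>lborel)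
        = indicator L y * (\<integral>\<^sup>+x. indicator L (y - x) \<partial>lborel)"
      by (subst nn_integral_cmult) auto
    also have "(\<integral>\<^sup>+x. indicator L (y - x) \<partial>lborel) = (\<integral>\<^sup>+x. indicator L x \<partial>lborel)"
      by (rule nn_integral_reflect) simp
    finally show "(\<integral>\<^sup>+x. indicator L y * indicator L (y - x) \<partial>lborel) = indicator L y * emeasure lborel L"
      by simp
  qed
  also have "\<dots> = emeasure lborel L * emeasure lborel L"
    by (subst nn_integral_multc) auto
  finally show ?thesis .
qed

(* For p, q in L the shift by t (p - q) keeps the homothetic copy (1 - t) L + t p inside
   L \<inter> (L + t (p - q)); so the covariogram is at least (1 - t)^2 |L| there. *)
lemma covariogram_lower_bound:
  fixes L :: "(real^2) set"
  assumes L: "compact L" "convex L" and p: "p \<in> L" and q: "q \<in> L" and t: "0 \<le> t" "t \<le> 1"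
  shows "ennreal ((1 - t)^2) * emeasure lborel L \<le> covariogram L (t *\<^sub>R (p - q))"
proof -
  define x where "x = t *\<^sub>R (p - q)"
  have LB [measurable]: "L \<in> sets borel" using L by (simp add: borel_compact)
  have eq: "(\<lambda>y. indicator L y * indicator L (y - x) :: ennreal) = indicator {y \<in> L. y - x \<in> L}"
    by (auto simp: fun_eq_iff split: split_indicator)
  have sb: "{y \<in> L. y - x \<in> L} \<in> sets borel" by measurable
  have sub: "(\<lambda>z. (1 - t) *\<^sub>R z + t *\<^sub>R p) ` L \<subseteq> {y \<in> L. y - x \<in> L}"
  proof
    fix y assume "y \<in> (\<lambda>z. (1 - t) *\<^sub>R z + t *\<^sub>R p) ` L"
    then obtain z where z: "z \<in> L" and y: "y = (1 - t) *\<^sub>R z + t *\<^sub>R p" by auto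
    have "y \<in> L" unfolding y using L(2) z p t by (intro convexD) auto
    moreover have "y - x = (1 - t) *\<^sub>R z + t *\<^sub>R q" by (simp add: y x_def algebra_simps)
    moreover have "(1 - t) *\<^sub>R z + t *\<^sub>R q \<in> L" using L(2) z q t by (intro convexD) auto
    ultimately show "y \<in> {y \<in> L. y - x \<in> L}" by simp
  qed
  have "ennreal ((1 - t)^2) * emeasure lborel L = emeasure lborel ((\<lambda>z. (1 - t) *\<^sub>R z + t *\<^sub>R p) ` L)"
    by (rule emeasure_scaled_translate[symmetric]) (rule L)
  also have "\<dots> \<le> emeasure lborel {y \<in> L. y - x \<in> L}"
    using sub sb by (intro emeasure_mono) auto
  also have "\<dots> = covariogram L x"
    unfolding covariogram_def eq using sb by simp
  finally show ?thesis unfolding x_def .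
qed

definition difference_cone :: "(real^2) set \<Rightarrow> ((real^2) \<times> real) set" where
  "difference_cone L = (\<lambda>(z, t). (t *\<^sub>R z, t)) ` (difference_body L \<times> {0..1})"

lemma compact_difference_cone: "compact L \<Longrightarrow> compact (difference_cone L)"
  unfolding difference_cone_def
  by (intro compact_continuous_image compact_Times compact_difference_body)
     (auto simp: case_prod_unfold intro!: continuous_intros)

lemma difference_cone_iff:
  "(x, t) \<in> difference_cone L \<longleftrightarrow> 0 \<le> t \<and> t \<le> 1 \<and> x \<in> (\<lambda>z. t *\<^sub>R z + 0) ` difference_body L"
  unfolding difference_cone_def by force

(* The weight 2 (1 - t), integrated over the heights t at which x lies in the cone, is at most
   covariogram(x) / |L|: by the lower bound, all such t satisfy (1 - t)^2 |L| <= covariogram(x). *)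
lemma difference_cone_weight_bound:
  fixes L :: "(real^2) set"
  assumes L: "compact L" "convex L" and A: "0 < emeasure lborel L"
  shows "emeasure lborel L * (\<integral>\<^sup>+t. ennreal (2 * (1 - t)) * indicator (difference_cone L) (x, t) \<partial>lborel)
          \<le> covariogram L x"
proof -
  define g where "g = covariogram L x"
  obtain a where a: "emeasure lborel L = ennreal a" "0 < a"
    using A emeasure_compact_finite[OF L(1)] by (cases "emeasure lborel L" rule: ennreal_cases) auto
  have "g \<le> (\<integral>\<^sup>+y. indicator L y \<partial>lborel)"
    unfolding g_def covariogram_def by (intro nn_integral_mono) (auto split: split_indicator)
  then obtain c where c: "g = ennreal c" "0 \<le> c" "c \<le> a"
    using a by (cases g rule: ennreal_cases) (auto simp: top_unique borel_compact L(1))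
  define \<rho> where "\<rho> = c / a"
  have \<rho>: "0 \<le> \<rho>" "\<rho> \<le> 1" using c a by (auto simp: \<rho>_def)
  define cc where "cc = 1 - sqrt \<rho>"
  have cc: "0 \<le> cc" "cc \<le> 1" using \<rho> by (auto simp: cc_def)
  have height: "cc \<le> t" if "(x, t) \<in> difference_cone L" for t
  proof -
    from that obtain z where t: "0 \<le> t" "t \<le> 1" and z: "z \<in> difference_body L" and xz: "x = t *\<^sub>R z"
      unfolding difference_cone_iff by auto
    from z obtain p q where pq: "p \<in> L" "q \<in> L" "z = p - q" unfolding difference_body_def by auto
    have "ennreal ((1 - t)^2) * emeasure lborel L \<le> g"
      unfolding g_def xz pq(3) by (rule covariogram_lower_bound[OF L pq(1,2) t])
    then have "ennreal ((1 - t)^2 * a) \<le> ennreal c" using a c by (simp add: ennreal_mult)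
    then have "(1 - t)^2 \<le> \<rho>" using a c by (simp add: ennreal_le_iff \<rho>_def field_simps)
    then have "1 - t \<le> sqrt \<rho>" using t by (simp add: real_le_rsqrt)
    then show ?thesis by (simp add: cc_def)
  qed
  have "(\<integral>\<^sup>+t. ennreal (2 * (1 - t)) * indicator (difference_cone L) (x, t) \<partial>lborel)
        \<le> (\<integral>\<^sup>+t. ennreal (2 * (1 - t)) * indicator {cc..1} t \<partial>lborel)"
    using height by (intro nn_integral_mono) (auto simp: difference_cone_iff split: split_indicator)
  also have "\<dots> = ennreal ((2 * 1 - 1^2) - (2 * cc - cc^2))"
    using cc by (intro nn_integral_FTC_Icc) (auto intro!: derivative_eq_intros)
  also have "(2 * 1 - 1^2) - (2 * cc - cc^2) = \<rho>"
    using \<rho> by (simp add: cc_def power2_eq_square algebra_simps)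
  finally have "emeasure lborel L * (\<integral>\<^sup>+t. ennreal (2 * (1 - t)) * indicator (difference_cone L) (x, t) \<partial>lborel)
      \<le> ennreal a * ennreal \<rho>"
    using a by (auto intro: mult_left_mono)
  also have "\<dots> = g" using a c \<rho> by (simp add: ennreal_mult[symmetric] \<rho>_def)
  finally show ?thesis unfolding g_def .
qed

lemma difference_cone_section_integral:
  fixes L :: "(real^2) set"
  assumes L: "compact L"
  shows "(\<integral>\<^sup>+x. ennreal (2 * (1 - t)) * indicator (difference_cone L) (x, t) \<partial>lborel)
       = emeasure lborel (difference_body L) * (ennreal (2 * (1 - t) * t^2) * indicator {0..1} t)"
proof (cases "0 \<le> t \<and> t \<le> 1")
  case True
  have [measurable]: "difference_cone L \<in> sets borel"
    using compact_difference_cone[OF L] by (simp add: borel_compact)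
  have eq: "{x. (x, t) \<in> difference_cone L} = (\<lambda>z. t *\<^sub>R z + 0) ` difference_body L"
    using True by (auto simp: difference_cone_iff)
  have cp: "compact ((\<lambda>z. t *\<^sub>R z + 0) ` difference_body L)"
    by (intro compact_continuous_image compact_difference_body L continuous_intros)
  have "(\<integral>\<^sup>+x. ennreal (2 * (1 - t)) * indicator (difference_cone L) (x, t) \<partial>lborel)
      = ennreal (2 * (1 - t)) * (\<integral>\<^sup>+x. indicator {x. (x, t) \<in> difference_cone L} x \<partial>lborel)"
    by (subst nn_integral_cmult[symmetric]) (auto intro!: nn_integral_cong split: split_indicator)
  also have "(\<integral>\<^sup>+x. indicator {x. (x, t) \<in> difference_cone L} x \<partial>lborel)
      = emeasure lborel ((\<lambda>z. t *\<^sub>R z + 0) ` difference_body L)"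
    unfolding eq using borel_compact[OF cp] by (subst nn_integral_indicator) auto
  also have "\<dots> = ennreal (t^2) * emeasure lborel (difference_body L)"
    by (rule emeasure_scaled_translate) (rule compact_difference_body[OF L])
  finally show ?thesis using True by (simp add: ennreal_mult[symmetric] mult_ac)
next
  case False
  then have "\<And>x. indicator (difference_cone L) (x, t) = (0::ennreal)"
    by (auto simp: difference_cone_iff split: split_indicator)
  then show ?thesis using False by simp
qed

(* Total weight of the cone: by Fubini and the section integral it is
   |D(L)| \<integral>_0^1 2 (1 - t) t^2 dt = |D(L)| / 6. *)
lemma difference_cone_total_weight:
  fixes L :: "(real^2) set"
  assumes L: "compact L"
  shows "(\<lambda>x. \<integral>\<^sup>+t. ennreal (2 * (1 - t)) * indicator (difference_cone L) (x, t) \<partial>lborel)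
           \<in> borel_measurable lborel"
    and "(\<integral>\<^sup>+x. \<integral>\<^sup>+t. ennreal (2 * (1 - t)) * indicator (difference_cone L) (x, t) \<partial>lborel \<partial>lborel)
           = emeasure lborel (difference_body L) * ennreal (1/6)"
proof -
  let ?W = "\<lambda>x. \<integral>\<^sup>+t. ennreal (2 * (1 - t)) * indicator (difference_cone L) (x, t) \<partial>lborel"
  define h where "h = (\<lambda>(x::real^2, t::real). ennreal (2 * (1 - t)) * indicator (difference_cone L) (x, t))"
  have [measurable]: "difference_cone L \<in> sets borel"
    using compact_difference_cone[OF L] by (simp add: borel_compact)
  have [measurable]: "(\<lambda>p::(real^2)\<times>real. snd p) \<in> borel_measurable borel"
    by (intro borel_measurable_continuous_onI continuous_intros)
  have "(\<lambda>p::(real^2)\<times>real. ennreal (2 * (1 - snd p)) * indicator (difference_cone L) p)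
      \<in> borel_measurable borel"
    by measurable
  then have hm: "h \<in> borel_measurable (lborel \<Otimes>\<^sub>M lborel)"
    unfolding lborel_prod h_def by (simp add: case_prod_unfold)
  then show "?W \<in> borel_measurable lborel"
    using lborel.borel_measurable_nn_integral_fst[of h] by (simp add: h_def case_prod_unfold)
  have "(\<integral>\<^sup>+x. ?W x \<partial>lborel) = (\<integral>\<^sup>+t. (\<integral>\<^sup>+x. h (x, t) \<partial>lborel) \<partial>lborel)"
    using lborel_pair.Fubini'[of "\<lambda>x t. h (x, t)"] hm by (simp add: h_def case_prod_unfold)
  also have "\<dots> = emeasure lborel (difference_body L)
      * (\<integral>\<^sup>+t. ennreal (2 * (1 - t) * t^2) * indicator {0..1} t \<partial>lborel)"
    unfolding h_def case_prod_conv difference_cone_section_integral[OF L]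
    by (subst nn_integral_cmult) auto
  also have "(\<integral>\<^sup>+t. ennreal (2 * (1 - t) * t^2) * indicator {0..1} t \<partial>lborel)
      = ennreal ((2/3 * 1^3 - 1/2 * 1^4) - (2/3 * 0^3 - 1/2 * 0^4))"
  proof (intro nn_integral_FTC_Icc)
    fix t :: real assume "t \<in> {0..1}"
    then show "0 \<le> 2 * (1 - t) * t^2" by simp
  qed (auto intro!: derivative_eq_intros simp: power2_eq_square power3_eq_cube algebra_simps)
  finally show "(\<integral>\<^sup>+x. ?W x \<partial>lborel) = emeasure lborel (difference_body L) * ennreal (1/6)"
    by simp
qed

(* Planar Rogers-Shephard inequality: |D(L)| <= 6 |L|.  The total cone weight |D(L)| / 6 is,
   by the weight bound, at most the integral of the covariogram divided by |L|, that is |L|. *)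
theorem rogers_shephard:
  fixes L :: "(real^2) set"
  assumes L: "compact L" "convex L" and A: "0 < emeasure lborel L"
  shows "emeasure lborel (difference_body L) \<le> 6 * emeasure lborel L"
proof -
  let ?W = "\<lambda>x. \<integral>\<^sup>+t. ennreal (2 * (1 - t)) * indicator (difference_cone L) (x, t) \<partial>lborel"
  have "emeasure lborel L * (emeasure lborel (difference_body L) * ennreal (1/6))
      = (\<integral>\<^sup>+x. emeasure lborel L * ?W x \<partial>lborel)"
    using difference_cone_total_weight[OF L(1)] by (simp add: nn_integral_cmult)
  also have "\<dots> \<le> (\<integral>\<^sup>+x. covariogram L x \<partial>lborel)"
    by (intro nn_integral_mono difference_cone_weight_bound[OF L A])
  also have "\<dots> = emeasure lborel L * emeasure lborel L"
    using L(1) by (intro integral_covariogram) (simp add: borel_compact)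
  finally have bound: "emeasure lborel L * (emeasure lborel (difference_body L) * ennreal (1/6))
      \<le> emeasure lborel L * emeasure lborel L" .
  obtain a where a: "emeasure lborel L = ennreal a" "0 < a"
    using A emeasure_compact_finite[OF L(1)] by (cases "emeasure lborel L" rule: ennreal_cases) auto
  obtain e where e: "emeasure lborel (difference_body L) = ennreal e" "0 \<le> e"
    using emeasure_compact_finite[OF compact_difference_body[OF L(1)]]
    by (cases "emeasure lborel (difference_body L)" rule: ennreal_cases) auto
  have "a * (e * (1/6)) \<le> a * a"
    using bound a e by (simp add: ennreal_mult[symmetric] ennreal_le_iff)
  then have "e \<le> 6 * a" using a by (simp add: field_simps)
  then have "ennreal e \<le> ennreal (6 * a)" by (rule ennreal_leI)
  then show ?thesis using a e by (simp add: ennreal_mult)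
qed

lemma inner_2: "(x::real^2) \<bullet> y = x$1 * y$1 + x$2 * y$2"
  by (simp add: inner_vec_def sum_2)

lemma exists_perp_unit: "\<exists>u::real^2. norm u = 1 \<and> u \<bullet> v = 0"
proof (cases "v = 0")
  case True
  then show ?thesis by (intro exI[of _ "axis 1 1"]) (simp add: norm_eq_sqrt_inner inner_2 axis_def)
next
  case False
  define r :: "real^2" where "r = vector [- v$2, v$1]"
  have rv: "r \<bullet> v = 0" by (simp add: r_def inner_2)
  have "norm r = norm v" unfolding norm_eq_sqrt_inner by (simp add: r_def inner_2 algebra_simps)
  then have "norm r \<noteq> 0" using False by simp
  then show ?thesis using rv by (intro exI[of _ "sgn r"]) (auto simp: norm_sgn sgn_div_norm)
qed

(* Projecting onto the line orthogonal to a unit vector u preserves the component along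
   any v orthogonal to u; a translate of the projection of K inside that of L therefore
   realises every v-component of a difference in K as one of a difference in L. *)
lemma proj_hyp_difference_component:
  assumes hyp: "proj_hyp K L" and x: "x \<in> K" and y: "y \<in> K"
  shows "\<exists>p\<in>L. \<exists>q\<in>L. v \<bullet> (x - y) = v \<bullet> (p - q)"
proof -
  obtain u :: "real^2" where u: "norm u = 1" "u \<bullet> v = 0" using exists_perp_unit by blast
  define P where "P z = z - (z \<bullet> u) *\<^sub>R u" for z
  have vP: "v \<bullet> P z = v \<bullet> z" for z using u(2) by (simp add: P_def inner_diff_right inner_commute)
  obtain w where w: "(\<lambda>z. z + w) ` proj_perp u K \<subseteq> proj_perp u L"
    using hyp u(1) unfolding proj_hyp_def contains_translate_def by blast
  obtain p where p: "p \<in> L" "P x + w = P p"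
    using w x unfolding proj_perp_def P_def by blast
  obtain q where q: "q \<in> L" "P y + w = P q"
    using w y unfolding proj_perp_def P_def by blast
  have "v \<bullet> (x - y) = v \<bullet> (P x + w) - v \<bullet> (P y + w)"
    by (simp add: vP inner_add_right inner_diff_right)
  also have "\<dots> = v \<bullet> (p - q)" using p q by (simp add: vP inner_diff_right)
  finally show ?thesis using p q by blast
qed

(* Hence D(K) \<subseteq> D(L): a point of D(K) outside the compact convex set D(L) would be strictly
   separated from it by a linear functional, contradicting the previous lemma. *)
lemma proj_hyp_difference_body_subset:
  assumes hyp: "proj_hyp K L" and L: "compact L" "convex L"
  shows "difference_body K \<subseteq> difference_body L"
proof
  fix d assume "d \<in> difference_body K"
  then obtain x y where xy: "x \<in> K" "y \<in> K" "d = x - y" unfolding difference_body_def by auto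
  show "d \<in> difference_body L"
  proof (rule ccontr)
    assume "d \<notin> difference_body L"
    then obtain a b where ab: "a \<bullet> d < b" "\<forall>z\<in>difference_body L. b < a \<bullet> z"
      using separating_hyperplane_closed_point convex_difference_body[OF L(2)]
        compact_imp_closed[OF compact_difference_body[OF L(1)]] by blast
    obtain p q where pq: "p \<in> L" "q \<in> L" "a \<bullet> (x - y) = a \<bullet> (p - q)"
      using proj_hyp_difference_component[OF hyp xy(1,2)] by blast
    have "p - q \<in> difference_body L" using pq unfolding difference_body_def by blast
    then show False using ab pq xy by force
  qed
qed

(* Degenerate case: if L has zero area it lies on a line, and then so does K. *)
lemma proj_hyp_null_area:
  fixes K L :: "(real^2) set"
  assumes L: "compact L" "convex L" and hyp: "proj_hyp K L" and L0: "emeasure lborel L = 0"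
  shows "measure lebesgue K = 0"
proof (cases "K = {}")
  case False
  then obtain k0 where k0: "k0 \<in> K" by auto
  obtain p0 where p0: "p0 \<in> L" using proj_hyp_difference_component[OF hyp k0 k0] by blast
  have "L \<in> null_sets lborel" using L0 L by (simp add: null_sets_def borel_compact)
  then have "negligible L" by (simp add: negligible_iff_null_sets null_sets_completionI)
  then have "interior L = {}" using negligible_convex_interior[OF L(2)] by simp
  then have "aff_dim L \<noteq> int DIM(real^2)"
    using interior_rel_interior_gen[of L] rel_interior_eq_empty[OF L(2)] p0 by auto
  then have "aff_dim L < int DIM(real^2)" using aff_dim_le_DIM[of L] by linarith
  then obtain a b where ab: "a \<noteq> 0" "L \<subseteq> {x. a \<bullet> x = b}"
    by (rule aff_lowdim_subset_hyperplane)
  have "K \<subseteq> {x. a \<bullet> x = a \<bullet> k0}"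
  proof
    fix x assume x: "x \<in> K"
    have "x - k0 \<in> difference_body L"
      using proj_hyp_difference_body_subset[OF hyp L] x k0 unfolding difference_body_def by blast
    then obtain p q where "p \<in> L" "q \<in> L" "x - k0 = p - q" unfolding difference_body_def by auto
    then have "a \<bullet> (x - k0) = 0" using ab by (auto simp: inner_diff_right)
    then show "x \<in> {x. a \<bullet> x = a \<bullet> k0}" by (simp add: inner_diff_right)
  qed
  then have "negligible K" using negligible_hyperplane[of a "a \<bullet> k0"] ab(1) negligible_subset by blast
  then show ?thesis by (rule negligible_imp_measure0)
qed simp

theorem proj_hyp_area_bound:
  fixes K L :: "(real^2) set"
  assumes K: "compact K" "convex K" and L: "compact L" "convex L" and hyp: "proj_hyp K L"
  shows "measure lebesgue K \<le> 3/2 * measure lebesgue L"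
proof (cases "emeasure lborel L = 0")
  case True
  then show ?thesis using proj_hyp_null_area[OF L hyp] by simp
next
  case False
  have "4 * emeasure lborel K \<le> emeasure lborel (difference_body K)"
    by (rule brunn_minkowski_difference_body[OF K])
  also have "\<dots> \<le> emeasure lborel (difference_body L)"
    using proj_hyp_difference_body_subset[OF hyp L] difference_body_borel[OF L(1)]
    by (intro emeasure_mono) auto
  also have "\<dots> \<le> 6 * emeasure lborel L"
    using False by (intro rogers_shephard[OF L]) (simp add: zero_less_iff_neq_zero)
  finally have "ennreal (4 * measure lebesgue K) \<le> ennreal (6 * measure lebesgue L)"
    unfolding emeasure_compact_eq_measure[OF K(1)] emeasure_compact_eq_measure[OF L(1)]
    by (simp add: ennreal_mult)
  then show ?thesis by (simp add: ennreal_le_iff)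
qed

lemma proj_perp_rotated:
  fixes u :: "real^2"
  assumes u: "norm u = 1"
  shows "z - (z \<bullet> u) *\<^sub>R u = (z \<bullet> vector [- u$2, u$1]) *\<^sub>R vector [- u$2, u$1]"
proof -
  have uu: "u$1 * u$1 + u$2 * u$2 = 1" using u unfolding norm_eq_sqrt_inner by (simp add: inner_2)
  have "z$1 - (z$1 * u$1 + z$2 * u$2) * u$1 = (- z$1 * u$2 + z$2 * u$1) * (- u$2)"
    using uu by algebra
  moreover have "z$2 - (z$1 * u$1 + z$2 * u$2) * u$2 = (- z$1 * u$2 + z$2 * u$1) * u$1"
    using uu by algebra
  ultimately show ?thesis by (simp add: vec_eq_iff forall_2 inner_2)
qed

(* A compact interval [m, M] contains every point (x - y)/2 + (m + M)/2 with x, y in it: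
   the centred interval of the same length, (S - S)/2, translates into S. *)
lemma compact_convex_half_difference_shift:
  fixes S :: "real set"
  assumes S: "compact S" "convex S" and x: "x \<in> S" and y: "y \<in> S"
  shows "(x - y) / 2 + (Inf S + Sup S) / 2 \<in> S"
proof -
  have ne: "S \<noteq> {}" using x by auto
  have bdd: "bdd_below S" "bdd_above S"
    using S(1) by (simp_all add: bounded_imp_bdd_below bounded_imp_bdd_above compact_imp_bounded)
  have "Inf S \<in> S" "Sup S \<in> S"
    using S(1) ne bdd by (simp_all add: closed_contains_Inf closed_contains_Sup compact_imp_closed)
  moreover have "is_interval S" using S(2) by (simp add: is_interval_convex_1)
  moreover have "Inf S \<le> x" "x \<le> Sup S" "Inf S \<le> y" "y \<le> Sup S"
    using x y bdd by (simp_all add: cInf_lower cSup_upper)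
  then have "Inf S \<le> (x - y) / 2 + (Inf S + Sup S) / 2 \<and> (x - y) / 2 + (Inf S + Sup S) / 2 \<le> Sup S"
    by (simp add: field_simps)
  ultimately show ?thesis unfolding is_interval_1 by blast
qed

(* The symmetral (L - L)/2 satisfies the projection hypothesis for L: along every line, the
   projection of L is an interval and that of (L - L)/2 is a translate of the centred interval
   of the same length. *)
lemma proj_hyp_half_difference_body:
  fixes L :: "(real^2) set"
  assumes L: "compact L" "convex L"
  shows "proj_hyp ((\<lambda>z. (1/2::real) *\<^sub>R z) ` difference_body L) L"
  unfolding proj_hyp_def contains_translate_def
proof (intro allI impI)
  fix u :: "real^2" assume u: "norm u = 1"
  define v :: "real^2" where "v = vector [- u$2, u$1]"
  have Pv: "z - (z \<bullet> u) *\<^sub>R u = (z \<bullet> v) *\<^sub>R v" for z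
    unfolding v_def by (rule proj_perp_rotated[OF u])
  define S where "S = (\<lambda>z. z \<bullet> v) ` L"
  have S: "compact S" "convex S" unfolding S_def
    by (auto intro!: compact_continuous_image convex_linear_image continuous_intros L
        simp: bounded_linear_inner_left bounded_linear.linear)
  define c where "c = (Inf S + Sup S) / 2"
  show "\<exists>w. (\<lambda>x. x + w) ` proj_perp u ((\<lambda>z. (1/2::real) *\<^sub>R z) ` difference_body L) \<subseteq> proj_perp u L"
  proof (intro exI[of _ "c *\<^sub>R v"] subsetI)
    fix k assume "k \<in> (\<lambda>x. x + c *\<^sub>R v) ` proj_perp u ((\<lambda>z. (1/2::real) *\<^sub>R z) ` difference_body L)"
    then obtain x y where xy: "x \<in> L" "y \<in> L"
      and k: "k = ((1/2) *\<^sub>R (x - y)) - (((1/2) *\<^sub>R (x - y)) \<bullet> u) *\<^sub>R u + c *\<^sub>R v"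
      unfolding proj_perp_def difference_body_def by auto
    define \<tau> where "\<tau> = (x \<bullet> v - y \<bullet> v) / 2 + c"
    have "\<tau> \<in> S" unfolding \<tau>_def c_def
      using xy by (intro compact_convex_half_difference_shift[OF S]) (auto simp: S_def)
    then obtain z where z: "z \<in> L" "\<tau> = z \<bullet> v" unfolding S_def by auto
    have "k = (((1/2) *\<^sub>R (x - y)) \<bullet> v) *\<^sub>R v + c *\<^sub>R v"
      unfolding k Pv ..
    also have "\<dots> = \<tau> *\<^sub>R v"
      unfolding \<tau>_def by (subst scaleR_add_left[symmetric]) (simp add: inner_diff_left)
    also have "\<dots> = z - (z \<bullet> u) *\<^sub>R u" using z by (simp add: Pv)
    finally show "k \<in> proj_perp u L" unfolding proj_perp_def using z by blast
  qed
qed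

(* The hexagon |x1| <= 1, |x2| <= 1, |x1 + x2| <= 1, i.e. D of the standard triangle. *)
definition hexagon :: "(real^2) set" where
  "hexagon = {x. \<bar>x$1\<bar> \<le> 1 \<and> \<bar>x$2\<bar> \<le> 1 \<and> \<bar>x$1 + x$2\<bar> \<le> 1}"

lemma closed_hexagon: "closed hexagon"
  unfolding hexagon_def by (intro closed_Collect_conj closed_Collect_le continuous_intros)

lemma bounded_hexagon: "bounded hexagon"
proof -
  have "norm x \<le> 2" if "x \<in> hexagon" for x
    using that norm_le_l1_cart[of x] by (simp add: hexagon_def sum_2)
  then show ?thesis unfolding bounded_iff by blast
qed

lemma square_covered_by_hexagon:
  defines "T1 \<equiv> convex hull {vector [1, 0], vector [0, 1], vector [1, 1]} :: (real^2) set"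
    and "T2 \<equiv> convex hull {vector [-1, 0], vector [0, -1], vector [-1, -1]} :: (real^2) set"
  shows "cbox (vector [-1, -1]) (vector [1, 1]) \<subseteq> hexagon \<union> T1 \<union> T2"
proof
  fix z :: "real^2" assume "z \<in> cbox (vector [-1, -1]) (vector [1, 1])"
  then have z: "\<bar>z$1\<bar> \<le> 1" "\<bar>z$2\<bar> \<le> 1" by (auto simp: mem_box_cart forall_2)
  consider "\<bar>z$1 + z$2\<bar> \<le> 1" | "z$1 + z$2 > 1" | "z$1 + z$2 < -1" by linarith
  then show "z \<in> hexagon \<union> T1 \<union> T2"
  proof cases
    case 1 then show ?thesis using z unfolding hexagon_def by auto
  next
    case 2
    have "z = (1 - z$2) *\<^sub>R vector [1, 0] + (1 - z$1) *\<^sub>R vector [0, 1]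
        + (z$1 + z$2 - 1) *\<^sub>R (vector [1, 1] :: real^2)"
      by (simp add: vec_eq_iff forall_2)
    moreover have "0 \<le> 1 - z$2" "0 \<le> 1 - z$1" "0 \<le> z$1 + z$2 - 1" using z 2 by auto
    ultimately have "z \<in> T1" unfolding T1_def convex_hull_3 by (intro CollectI exI) auto
    then show ?thesis by simp
  next
    case 3
    have "z = (1 + z$2) *\<^sub>R vector [-1, 0] + (1 + z$1) *\<^sub>R vector [0, -1]
        + (- z$1 - z$2 - 1) *\<^sub>R (vector [-1, -1] :: real^2)"
      by (simp add: vec_eq_iff forall_2)
    moreover have "0 \<le> 1 + z$2" "0 \<le> 1 + z$1" "0 \<le> - z$1 - z$2 - 1" using z 3 by auto
    ultimately have "z \<in> T2" unfolding T2_def convex_hull_3 by (intro CollectI exI) auto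
    then show ?thesis by simp
  qed
qed

(* Hence the hexagon has area at least 4 - 1/2 - 1/2 = 3. *)
lemma hexagon_measure: "3 \<le> measure lborel hexagon"
proof -
  define Q :: "(real^2) set" where "Q = cbox (vector [-1, -1]) (vector [1, 1])"
  define T1 :: "(real^2) set" where "T1 = convex hull {vector [1, 0], vector [0, 1], vector [1, 1]}"
  define T2 :: "(real^2) set" where "T2 = convex hull {vector [-1, 0], vector [0, -1], vector [-1, -1]}"
  have HB: "hexagon \<in> sets borel" using closed_hexagon by simp
  have T1B: "T1 \<in> sets borel" "bounded T1" unfolding T1_def
    by (auto intro: borel_closed compact_imp_closed compact_imp_bounded finite_imp_compact_convex_hull)
  have T2B: "T2 \<in> sets borel" "bounded T2" unfolding T2_def
    by (auto intro: borel_closed compact_imp_closed compact_imp_bounded finite_imp_compact_convex_hull)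
  have mQ: "measure lborel Q = 4"
  proof -
    have "(0::real^2) \<in> Q" unfolding Q_def by (simp add: mem_box_cart forall_2)
    then have "Q \<noteq> {}" by auto
    then show ?thesis unfolding Q_def by (simp add: content_cbox_cart UNIV_2)
  qed
  have sub: "Q \<subseteq> hexagon \<union> T1 \<union> T2"
    unfolding Q_def T1_def T2_def by (rule square_covered_by_hexagon)
  have "4 \<le> measure lborel (hexagon \<union> T1 \<union> T2)"
    unfolding mQ[symmetric] using sub HB T1B T2B bounded_hexagon
    by (intro measure_mono_fmeasurable) (auto simp: Q_def intro!: fmeasurableI emeasure_bounded_finite)
  also have "\<dots> \<le> measure lborel (hexagon \<union> T1) + measure lborel T2"
    using HB T1B T2B by (intro measure_Un_le) auto
  also have "\<dots> \<le> measure lborel hexagon + measure lborel T1 + measure lborel T2"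
    using HB T1B by (simp add: measure_Un_le)
  finally show ?thesis
    unfolding T1_def T2_def by (simp add: content_triangle)
qed

(* For the triangle with vertices a, b, c, the linear map sending the coordinate vectors to
   b - a and c - a carries the hexagon into D(L): write a point of the hexagon as a difference
   of two points of the standard triangle. *)
lemma triangle_difference_body_contains_hexagon:
  fixes a b c :: "real^2"
  shows "(\<lambda>x. x$1 *\<^sub>R (b - a) + x$2 *\<^sub>R (c - a)) ` hexagon \<subseteq> difference_body (convex hull {a, b, c})"
proof -
  define g where "g x = x$1 *\<^sub>R (b - a) + x$2 *\<^sub>R (c - a)" for x :: "real^2"
  have in_triangle: "a + p1 *\<^sub>R (b - a) + p2 *\<^sub>R (c - a) \<in> convex hull {a, b, c}"
    if "0 \<le> p1" "0 \<le> p2" "p1 + p2 \<le> 1" for p1 p2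
  proof -
    have "a + p1 *\<^sub>R (b - a) + p2 *\<^sub>R (c - a) = (1 - p1 - p2) *\<^sub>R a + p1 *\<^sub>R b + p2 *\<^sub>R c"
      by (simp add: algebra_simps)
    then show ?thesis unfolding convex_hull_3 using that by (intro CollectI exI[of _ "1 - p1 - p2"] exI) auto
  qed
  have in_difference: "g x \<in> difference_body (convex hull {a, b, c})"
    if "0 \<le> p1" "0 \<le> p2" "p1 + p2 \<le> 1" "0 \<le> q1" "0 \<le> q2" "q1 + q2 \<le> 1"
      "x$1 = p1 - q1" "x$2 = p2 - q2" for x p1 p2 q1 q2
  proof -
    have "g x = (a + p1 *\<^sub>R (b - a) + p2 *\<^sub>R (c - a)) - (a + q1 *\<^sub>R (b - a) + q2 *\<^sub>R (c - a))"
      unfolding g_def that(7) that(8) by (simp add: algebra_simps)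
    then show ?thesis unfolding difference_body_def using in_triangle that by blast
  qed
  have "g x \<in> difference_body (convex hull {a, b, c})" if x: "x \<in> hexagon" for x
  proof -
    have h: "\<bar>x$1\<bar> \<le> 1" "\<bar>x$2\<bar> \<le> 1" "\<bar>x$1 + x$2\<bar> \<le> 1" using x by (auto simp: hexagon_def)
    consider "0 \<le> x$1" "0 \<le> x$2" | "x$1 \<le> 0" "x$2 \<le> 0" | "0 \<le> x$1" "x$2 \<le> 0" | "x$1 \<le> 0" "0 \<le> x$2"
      by linarith
    then show ?thesis
    proof cases
      case 1 then show ?thesis using h by (intro in_difference[of "x$1" "x$2" 0 0]) auto
    next
      case 2 then show ?thesis using h by (intro in_difference[of 0 0 "- x$1" "- x$2"]) auto
    next
      case 3 then show ?thesis using h by (intro in_difference[of "x$1" 0 0 "- x$2"]) auto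
    next
      case 4 then show ?thesis using h by (intro in_difference[of 0 "x$2" "- x$1" 0]) auto
    qed
  qed
  then show ?thesis unfolding g_def by blast
qed

(* Equality case of Rogers-Shephard: for a triangle, |D(L)| >= 6 |L|, since the image of the
   hexagon has area |det| * 3 while the triangle has area |det| / 2. *)
lemma triangle_difference_body_measure:
  fixes a b c :: "real^2"
  defines "L \<equiv> convex hull {a, b, c}"
  shows "6 * measure lebesgue L \<le> measure lebesgue (difference_body L)"
proof -
  define g where "g x = x$1 *\<^sub>R (b - a) + x$2 *\<^sub>R (c - a)" for x :: "real^2"
  have lin: "linear g" unfolding g_def by (auto simp: linear_iff algebra_simps)
  have cL: "compact L" unfolding L_def by (intro finite_imp_compact_convex_hull) auto
  have det: "det (matrix g) = (b - a)$1 * (c - a)$2 - (c - a)$1 * (b - a)$2"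
    by (simp add: det_2 matrix_def g_def axis_def)
  have "measure lebesgue (g ` hexagon) = \<bar>det (matrix g)\<bar> * measure lebesgue hexagon"
    using bounded_hexagon closed_hexagon lin by (intro measure_lebesgue_linear_transformation) auto
  also have "measure lebesgue hexagon = measure lborel hexagon" using closed_hexagon by simp
  finally have "3 * \<bar>det (matrix g)\<bar> \<le> measure lebesgue (g ` hexagon)"
    using mult_left_mono[OF hexagon_measure abs_ge_zero[of "det (matrix g)"]] by (simp add: mult.commute)
  also have "\<dots> \<le> measure lebesgue (difference_body L)"
  proof (intro measure_mono_fmeasurable)
    show "g ` hexagon \<subseteq> difference_body L"
      unfolding g_def L_def by (rule triangle_difference_body_contains_hexagon)
    have "compact (g ` hexagon)"
      using bounded_hexagon closed_hexagon lin
      by (intro compact_continuous_image linear_continuous_on) (auto simp: compact_eq_bounded_closed linear_linear)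
    then show "g ` hexagon \<in> sets lebesgue" by (simp add: lmeasurable_compact fmeasurableD)
    show "difference_body L \<in> fmeasurable lebesgue"
      by (simp add: lmeasurable_compact compact_difference_body cL)
  qed
  moreover have "measure lebesgue L = \<bar>det (matrix g)\<bar> / 2"
    using cL unfolding det L_def by (simp add: borel_compact content_triangle abs_minus_commute algebra_simps)
  ultimately show ?thesis by simp
qed

(* The equality case: for a triangle L, the symmetral K = (L - L)/2 satisfies the hypothesis
   and |K| = |D(L)| / 4 >= 3/2 |L|, so by the inequality |K| = 3/2 |L|. *)
lemma triangle_half_difference_body:
  fixes a b c :: "real^2"
  defines "L \<equiv> convex hull {a, b, c}"
    and "K \<equiv> (\<lambda>z. (1/2::real) *\<^sub>R z) ` difference_body (convex hull {a, b, c})"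
  shows "proj_hyp K L \<and> measure lebesgue K = 3/2 * measure lebesgue L"
proof -
  have cL: "compact L" and cvL: "convex L"
    unfolding L_def by (auto intro: finite_imp_compact_convex_hull)
  have K: "K = (\<lambda>z. (1/2::real) *\<^sub>R z) ` difference_body L" unfolding K_def L_def ..
  have hyp: "proj_hyp K L" unfolding K by (rule proj_hyp_half_difference_body[OF cL cvL])
  have cK: "compact K" unfolding K
    by (intro compact_continuous_image compact_difference_body cL continuous_intros)
  have cvK: "convex K" unfolding K
    by (intro convex_linear_image convex_difference_body cvL) (simp add: linear_scaleR)
  have "measure lebesgue K = 1/4 * measure lebesgue (difference_body L)"
    using measure_lebesgue_affine[of "1/2::real" 0 "difference_body L"] unfolding K
    by (simp add: power2_eq_square)
  then have "3/2 * measure lebesgue L \<le> measure lebesgue K"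
    using triangle_difference_body_measure[of a b c] unfolding L_def by simp
  then show ?thesis using hyp proj_hyp_area_bound[OF cK cvK cL cvL hyp] by simp
qed

theorem mainTheorem12:
  shows "(\<forall>K L :: (real^2) set.
            compact K \<and> convex K \<and> compact L \<and> convex L \<and> proj_hyp K L \<longrightarrow>
            measure lebesgue K \<le> 3/2 * measure lebesgue L)
       \<and> (\<forall>a b c :: real^2. \<not> collinear {a, b, c} \<longrightarrow>
            (let L = convex hull {a, b, c};
                 K = (\<lambda>z. (1/2::real) *\<^sub>R z) ` {x - y | x y. x \<in> L \<and> y \<in> L}
             in proj_hyp K L \<and> measure lebesgue K = 3/2 * measure lebesgue L))"
  using proj_hyp_area_bound triangle_half_difference_body
  unfolding Let_def difference_body_def by blast

end
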